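(* Consider $N$ nodes communicating over a fixed, undirected, connected graph $\mathcal{G}=(\mathcal{V},\mathcal{E})$ with $\mathcal{V}=\{1,\dots,N\}$ and diameter $d_G$, running the asynchronous distributed logic-AND algorithm described in the context. Assume that for each node $i$ there exists $\bar T_i$ such that the waiting time satisfies $T_i\le \bar T_i$ in every awakening cycle. Suppose that when a flag $C_i$ switches from $0$ to $1$, it remains equal to $1$ indefinitely. Then a node $i$ satisfies $\prod_{b=1}^{d_i}S_i[d_G,b]=1$ in finite time if and only if at a certain time instant one has $C_j=1$ for all $j\in\mathcal{V}$.
   Context: Notation: $\mathcal{N}_i=\{j\in\mathcal{V}:(i,j)\in\mathcal{E}\}\cup\{i\}$ is the set of neighbors of node $i$ including $i$ itself, and $d_i=|\mathcal{N}_i|$. For a matrix $A$, $A[l,j]$ is its $(l,j)$ entry, $A[:,j]$ its $j$-th column, $A[l,:]$ its $l$-th row; writing $A[l,:]\gets 1$ sets all entries of row $l$ to $1$. Asynchronous communication model: each node has a local clock $\tau_i$ and a waiting time $T_i$. While $\tau_i<T_i$ the node is IDLE (it listens for messages from neighbors and may update local variables). When $\tau_i=T_i$ it becomes AWAKE, performs local computations, broadcasts information to its neighbors, resets $\tau_i=0$ and selects a new waiting time $T_i$. Logic-AND algorithm: each node $i$ has a flag $C_i\in\{0,1\}$, initially $0$, and a matrix $S_i\in\{0,1\}^{d_G\times d_i}$, initially zero. The columns of $S_i$ are indexed by the neighbors: node $i$ assigns to each $j\in\mathcal{N}_i\setminus\{i\}$ a column index $j|_i$, and column $d_i$ refers to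 node $i$ itself. When AWAKE, node $i$ does: if $\prod_{l=1}^{d_i}S_i[d_G,l]\neq 1$, set $S_i[1,d_i]\gets C_i$, then set $S_i[l,d_i]\gets\prod_{b=1}^{d_i}S_i[l-1,b]$ for $l=2,\dots,d_G$, and broadcast the column $S_i[:,d_i]$ to all $j\in\mathcal{N}_i\setminus\{i\}$. Then, if $\prod_{l=1}^{d_i}S_i[d_G,l]=1$, node $i$ stops and sends a STOP signal to all $j\in\mathcal{N}_i\setminus\{i\}$. When IDLE, node $i$ does: if a column $S_j[:,d_j]$ is received from $j\in\mathcal{N}_i\setminus\{i\}$ and no STOP signal has been received, set $S_i[l,j|_i]\gets S_j[l,d_j]$ for $l=1,\dots,d_G$; if a STOP signal is received, set $S_i[d_G,:]\gets 1$. *)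

theory Defs
  imports Main
begin

definition undirected_graph :: "('v \<Rightarrow> 'v \<Rightarrow> bool) \<Rightarrow> bool" where
  "undirected_graph E \<longleftrightarrow> (\<forall>u v. E u v \<longrightarrow> E v u) \<and> (\<forall>u. \<not> E u u)"

definition edges :: "('v \<Rightarrow> 'v \<Rightarrow> bool) \<Rightarrow> ('v \<times> 'v) set" where
  "edges E = {(a, b). E a b}"

definition connected_graph :: "('v \<Rightarrow> 'v \<Rightarrow> bool) \<Rightarrow> bool" where
  "connected_graph E \<longleftrightarrow> (\<forall>u v. (u, v) \<in> (edges E)\<^sup>*)"

definition gdist :: "('v \<Rightarrow> 'v \<Rightarrow> bool) \<Rightarrow> 'v \<Rightarrow> 'v \<Rightarrow> nat" where
  "gdist E u v = (LEAST k. (u, v) \<in> (edges E) ^^ k)"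

definition diam :: "('v::finite \<Rightarrow> 'v \<Rightarrow> bool) \<Rightarrow> nat" where
  "diam E = Max {gdist E u v | u v. True}"

definition nbrs :: "('v \<Rightarrow> 'v \<Rightarrow> bool) \<Rightarrow> 'v \<Rightarrow> 'v set" where
  "nbrs E i = {j. E i j} \<union> {i}"

text \<open>The matrix S_i is represented as a function M :: nat => 'v => nat, where M l b is the
entry in row l (1 <= l <= d_G) and in the column belonging to neighbour b of N_i;
the column of i itself plays the role of column d_i.  Entries outside rows 1..d_G and
outside N_i are never used.\<close>

record 'v lstate =
  Smat    :: "'v \<Rightarrow> nat \<Rightarrow> 'v \<Rightarrow> nat"
  stopped :: "'v \<Rightarrow> bool"
  stoprcv :: "'v \<Rightarrow> bool"

definition init_state :: "'v lstate" where
  "init_state = \<lparr> Smat = (\<lambda>i l b. 0), stopped = (\<lambda>i. False), stoprcv = (\<lambda>i. False) \<rparr>"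

definition prodrow :: "('v \<Rightarrow> 'v \<Rightarrow> bool) \<Rightarrow> 'v \<Rightarrow> (nat \<Rightarrow> 'v \<Rightarrow> nat) \<Rightarrow> nat \<Rightarrow> nat" where
  "prodrow E i M l = (\<Prod>b\<in>nbrs E i. M l b)"

text \<open>New own column computed by an awake node (sequential update:
S_i[1,d_i] := C_i, then S_i[l,d_i] := prod_b S_i[l-1,b] for l = 2..d_G, where
the product already uses the updated entry S_i[l-1,d_i]).\<close>

fun newcol :: "('v \<Rightarrow> 'v \<Rightarrow> bool) \<Rightarrow> 'v \<Rightarrow> nat \<Rightarrow> (nat \<Rightarrow> 'v \<Rightarrow> nat) \<Rightarrow> nat \<Rightarrow> nat" where
  "newcol E i c M 0 = M 0 i"
| "newcol E i c M (Suc 0) = c"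
| "newcol E i c M (Suc (Suc l)) =
     (\<Prod>b\<in>nbrs E i - {i}. M (Suc l) b) * newcol E i c M (Suc l)"

definition awake_mat ::
  "('v \<Rightarrow> 'v \<Rightarrow> bool) \<Rightarrow> nat \<Rightarrow> 'v \<Rightarrow> nat \<Rightarrow> (nat \<Rightarrow> 'v \<Rightarrow> nat) \<Rightarrow> (nat \<Rightarrow> 'v \<Rightarrow> nat)" where
  "awake_mat E dG i c M =
     (if prodrow E i M dG \<noteq> 1
      then (\<lambda>l b. if b = i \<and> 1 \<le> l \<and> l \<le> dG then newcol E i c M l else M l b)
      else M)"

text \<open>W i: node i is AWAKE in the current time step; c i: current value of its flag C_i.\<close>

definition after_awake ::
  "('v \<Rightarrow> 'v \<Rightarrow> bool) \<Rightarrow> nat \<Rightarrow> ('v \<Rightarrow> bool) \<Rightarrow> ('v \<Rightarrow> nat) \<Rightarrow> 'v lstate \<Rightarrow> 'v \<Rightarrow> (nat \<Rightarrow> 'v \<Rightarrow> nat)" where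
  "after_awake E dG W c st i =
     (if W i \<and> \<not> stopped st i then awake_mat E dG i (c i) (Smat st i) else Smat st i)"

definition sends_col ::
  "('v \<Rightarrow> 'v \<Rightarrow> bool) \<Rightarrow> nat \<Rightarrow> ('v \<Rightarrow> bool) \<Rightarrow> 'v lstate \<Rightarrow> 'v \<Rightarrow> bool" where
  "sends_col E dG W st i \<longleftrightarrow> W i \<and> \<not> stopped st i \<and> prodrow E i (Smat st i) dG \<noteq> 1"

definition sends_stop ::
  "('v \<Rightarrow> 'v \<Rightarrow> bool) \<Rightarrow> nat \<Rightarrow> ('v \<Rightarrow> bool) \<Rightarrow> ('v \<Rightarrow> nat) \<Rightarrow> 'v lstate \<Rightarrow> 'v \<Rightarrow> bool" where
  "sends_stop E dG W c st i \<longleftrightarrow>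
     W i \<and> \<not> stopped st i \<and> prodrow E i (after_awake E dG W c st i) dG = 1"

text \<open>One time step: first the awake nodes compute and broadcast; then every node
that has not stopped processes (in its IDLE phase) the messages broadcast in this step.
A stopped node no longer changes its state.\<close>

definition step ::
  "('v \<Rightarrow> 'v \<Rightarrow> bool) \<Rightarrow> nat \<Rightarrow> ('v \<Rightarrow> bool) \<Rightarrow> ('v \<Rightarrow> nat) \<Rightarrow> 'v lstate \<Rightarrow> 'v lstate" where
  "step E dG W c st =
    (let A = after_awake E dG W c st;
         stp = (\<lambda>i. stopped st i \<or> sends_stop E dG W c st i);
         newstop = (\<lambda>j. \<exists>i. E j i \<and> sends_stop E dG W c st i);
         rcv = (\<lambda>j. stoprcv st j \<or> (\<not> stp j \<and> newstop j))
     in \<lparr> Smat = (\<lambda>j l b.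
              if stp j then A j l b
              else if l = dG \<and> newstop j then 1
              else if E j b \<and> sends_col E dG W st b \<and> \<not> rcv j \<and> 1 \<le> l \<and> l \<le> dG
                then A b l b
              else A j l b),
          stopped = stp,
          stoprcv = rcv \<rparr>)"

text \<open>The execution: W t is the set of nodes awake at time t, C t j the value of flag C_j
at time t.  exec ... t is the state before the step at time t.\<close>

primrec exec ::
  "('v \<Rightarrow> 'v \<Rightarrow> bool) \<Rightarrow> nat \<Rightarrow> (nat \<Rightarrow> 'v \<Rightarrow> bool) \<Rightarrow> (nat \<Rightarrow> 'v \<Rightarrow> nat) \<Rightarrow> nat \<Rightarrow> 'v lstate" where
  "exec E dG W C 0 = init_state"
| "exec E dG W C (Suc t) = step E dG (W t) (C t) (exec E dG W C t)"

end

theory Submission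
  imports Defs
begin

(* Safety: by induction along the recomputation of a column, an entry S_j[k,b] = 1 certifies that
   every node within distance k - 1 of b has raised its flag at some time.  If the whole row d_G
   of S_i is one, these balls around the closed neighbourhood of i cover the graph,
   and since flags stay at 1 they are all 1 at a common time.
   Liveness: all entries only grow and stay in {0, 1}.  If no node ever finished, then once all
   flags are 1, rows 1, ..., d_G would successively become all ones everywhere, each within one
   maximal waiting time, so every node would finish; and once one node finishes, its STOP signals
   make every node finish, by connectedness. *)

lemma gdist_relpow:
  "connected_graph E \<Longrightarrow> (u, v) \<in> edges E ^^ gdist E u v"
  unfolding gdist_def connected_graph_def
  by (rule LeastI_ex) (meson rtrancl_power)

lemma gdist_eq_0D: "connected_graph E \<Longrightarrow> gdist E u v = 0 \<Longrightarrow> u = v"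
  using gdist_relpow[of E u v] by simp

lemma gdist_SucE:
  assumes "connected_graph E" "gdist E u v = Suc m"
  obtains w where "E u w" "gdist E w v \<le> m"
proof -
  have "(u, v) \<in> edges E ^^ Suc m" using gdist_relpow[OF assms(1), of u v] assms(2) by simp
  then obtain w where "(u, w) \<in> edges E" and "(w, v) \<in> edges E ^^ m" using relpow_Suc_D2 by metis
  moreover from this(2) have "gdist E w v \<le> m" unfolding gdist_def by (rule Least_le)
  ultimately show thesis using that by (auto simp: edges_def)
qed

lemma gdist_le_diam: "gdist E u v \<le> diam (E :: 'v::finite \<Rightarrow> 'v \<Rightarrow> bool)"
proof -
  have "{gdist E u v | u v. True} = (\<lambda>(u, v). gdist E u v) ` UNIV" by auto
  then have "finite {gdist E u v | u v. True}" by simp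
  then show ?thesis unfolding diam_def by (rule Max_ge) auto
qed

lemma diam_ge_1:
  assumes "connected_graph (E :: 'v::finite \<Rightarrow> 'v \<Rightarrow> bool)" "card (UNIV :: 'v set) \<ge> 2"
  shows "1 \<le> diam E"
proof -
  obtain u v :: 'v where "u \<noteq> v"
    using assms(2) by (metis card_le_Suc0_iff_eq finite_UNIV iso_tuple_UNIV_I not_less_eq_eq numeral_2_eq_2)
  then have "gdist E u v \<noteq> 0" using gdist_eq_0D[OF assms(1)] by blast
  then show ?thesis using gdist_le_diam[of E u v] by linarith
qed

lemma prodrow_eq_1_iff:
  "prodrow (E :: 'v::finite \<Rightarrow> 'v \<Rightarrow> bool) i M l = 1 \<longleftrightarrow> (\<forall>b\<in>nbrs E i. M l b = 1)"
  unfolding prodrow_def by (rule prod_eq_1_iff) simp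

definition below_recomputation ::
  "('v \<Rightarrow> 'v \<Rightarrow> bool) \<Rightarrow> nat \<Rightarrow> nat \<Rightarrow> 'v \<Rightarrow> (nat \<Rightarrow> 'v \<Rightarrow> nat) \<Rightarrow> bool" where
  "below_recomputation E dG c j M \<longleftrightarrow>
     M 1 j \<le> c \<and>
     (\<forall>k. 2 \<le> k \<and> k \<le> dG \<longrightarrow> M k j \<le> (\<Prod>b\<in>nbrs E j - {j}. M (k - 1) b) * M (k - 1) j)"

lemma le_newcol:
  assumes "below_recomputation E dG c j M"
  shows "1 \<le> k \<Longrightarrow> k \<le> dG \<Longrightarrow> M k j \<le> newcol E j c M k"
proof (induction k)
  case (Suc k)
  show ?case
  proof (cases k)
    case (Suc l)
    have "M (Suc k) j \<le> (\<Prod>b\<in>nbrs E j - {j}. M k b) * M k j"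
      using assms[unfolded below_recomputation_def, THEN conjunct2, rule_format, of "Suc k"]
        Suc.prems Suc by simp
    also have "\<dots> \<le> (\<Prod>b\<in>nbrs E j - {j}. M k b) * newcol E j c M k"
      using Suc.IH Suc.prems Suc by (simp add: mult_left_mono)
    finally show ?thesis using Suc by simp
  qed (use assms in \<open>simp add: below_recomputation_def\<close>)
qed simp

lemma newcol_le_1:
  "c \<le> 1 \<Longrightarrow> \<forall>l b. M l b \<le> (1::nat) \<Longrightarrow> newcol E j c M k \<le> 1"
proof (induction E j c M k rule: newcol.induct)
  case (3 E i c M l)
  have "(\<Prod>b\<in>nbrs E i - {i}. M (Suc l) b) \<le> 1"
    by (rule prod_le_1) (use "3.prems" in \<open>auto simp del: One_nat_def\<close>)
  with 3 show ?case by (simp add: mult_le_one del: One_nat_def)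
qed simp_all

lemma newcol_eq_1:
  assumes "\<forall>b\<in>nbrs E j. \<forall>k'. 1 \<le> k' \<and> k' \<le> l \<longrightarrow> M k' b = (1::nat)"
    and "1 \<le> k" "k \<le> Suc l"
  shows "newcol E j 1 M k = 1"
  using assms(2,3)
proof (induction k rule: dec_induct)
  case (step k)
  then have "(\<Prod>b\<in>nbrs E j - {j}. M k b) = 1" using assms(1) by (simp add: prod_eq_1_iff)
  with step show ?case by (cases k) simp_all
qed simp

lemma after_awake_eq:
  "after_awake E dG w c st j k b =
    (if w j \<and> \<not> stopped st j \<and> prodrow E j (Smat st j) dG \<noteq> 1 \<and> b = j \<and> 1 \<le> k \<and> k \<le> dG
     then newcol E j (c j) (Smat st j) k else Smat st j k b)"
  by (simp add: after_awake_def awake_mat_def)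

lemma after_awake_finished:
  "prodrow E j (Smat st j) dG = 1 \<Longrightarrow> after_awake E dG w c st j = Smat st j"
  by (simp add: after_awake_def awake_mat_def)

lemma step_simps:
  "stopped (step E dG w c st) j \<longleftrightarrow> stopped st j \<or> sends_stop E dG w c st j"
  "stoprcv (step E dG w c st) j \<longleftrightarrow> stoprcv st j \<or>
     \<not> (stopped st j \<or> sends_stop E dG w c st j) \<and> (\<exists>i. E j i \<and> sends_stop E dG w c st i)"
  "Smat (step E dG w c st) j l b =
    (if stopped st j \<or> sends_stop E dG w c st j then after_awake E dG w c st j l b
     else if l = dG \<and> (\<exists>i. E j i \<and> sends_stop E dG w c st i) then 1
     else if E j b \<and> sends_col E dG w st b \<and> \<not> stoprcv (step E dG w c st) j \<and> 1 \<le> l \<and> l \<le> dG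
     then after_awake E dG w c st b l b
     else after_awake E dG w c st j l b)"
  by (simp_all only: step_def Let_def lstate.select_convs)

lemma below_recomputation_awake_mat:
  assumes "below_recomputation E dG c j M"
  shows "below_recomputation E dG c j (awake_mat E dG j c M)"
proof (cases "prodrow E j M dG = 1")
  case False
  let ?M' = "awake_mat E dG j c M"
  have other: "?M' k b = M k b" if "b \<noteq> j" for k b
    using that by (simp add: awake_mat_def)
  have own: "?M' k j = newcol E j c M k" if "1 \<le> k" "k \<le> dG" for k
    using that False by (simp add: awake_mat_def)
  show ?thesis
    unfolding below_recomputation_def
  proof (intro conjI allI impI)
    show "?M' 1 j \<le> c"
      using own[of 1] assms by (cases "1 \<le> dG") (simp_all add: awake_mat_def below_recomputation_def)
  next
    fix k assume k: "2 \<le> k \<and> k \<le> dG"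
    then obtain m where m: "k = Suc (Suc m)" by (metis add_2_eq_Suc le_Suc_ex)
    have "(\<Prod>b\<in>nbrs E j - {j}. ?M' (k - 1) b) = (\<Prod>b\<in>nbrs E j - {j}. M (k - 1) b)"
      by (rule prod.cong) (simp_all add: other)
    then show "?M' k j \<le> (\<Prod>b\<in>nbrs E j - {j}. ?M' (k - 1) b) * ?M' (k - 1) j"
      using own[of k] own[of "k - 1"] k m by simp
  qed
qed (use assms in \<open>simp add: awake_mat_def\<close>)

lemma below_recomputation_mono:
  assumes "below_recomputation E dG c j M" "c \<le> c'"
    and "\<forall>k. M' k j = M k j" and "\<forall>k b. 1 \<le> k \<and> k \<le> dG \<longrightarrow> M k b \<le> (M' k b :: nat)"
  shows "below_recomputation E dG c' j M'"
  unfolding below_recomputation_def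
proof (intro conjI allI impI)
  show "M' 1 j \<le> c'" using assms(1-3) by (simp add: below_recomputation_def)
next
  fix k assume k: "2 \<le> k \<and> k \<le> dG"
  have "M' k j \<le> (\<Prod>b\<in>nbrs E j - {j}. M (k - 1) b) * M (k - 1) j"
    using assms(1,3) k by (simp add: below_recomputation_def)
  also have "\<dots> \<le> (\<Prod>b\<in>nbrs E j - {j}. M' (k - 1) b) * M' (k - 1) j"
  proof -
    have "(\<Prod>b\<in>nbrs E j - {j}. M (k - 1) b) \<le> (\<Prod>b\<in>nbrs E j - {j}. M' (k - 1) b)"
    proof (intro prod_mono conjI)
      fix b show "M (k - 1) b \<le> M' (k - 1) b"
        using assms(4)[rule_format, of "k - 1" b] k by linarith
    qed simp
    then show ?thesis using assms(3) by (simp add: mult_right_mono)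
  qed
  finally show "M' k j \<le> (\<Prod>b\<in>nbrs E j - {j}. M' (k - 1) b) * M' (k - 1) j" .
qed

(* Copies of a neighbour's column never exceed the original (except row d_G once a STOP has
   overwritten it by ones), and the own column never exceeds its recomputation; together these
   make every entry nondecreasing in time. *)
definition state_inv :: "('v \<Rightarrow> 'v \<Rightarrow> bool) \<Rightarrow> nat \<Rightarrow> ('v \<Rightarrow> nat) \<Rightarrow> 'v lstate \<Rightarrow> bool" where
  "state_inv E dG c st \<longleftrightarrow>
     (\<forall>j l b. Smat st j l b \<le> 1) \<and>
     (\<forall>j b. stoprcv st j \<longrightarrow> Smat st j dG b = 1) \<and>
     (\<forall>j. stopped st j \<longrightarrow> prodrow E j (Smat st j) dG = 1) \<and>
     (\<forall>j b k. E j b \<and> 1 \<le> k \<and> k \<le> dG \<and> \<not> (k = dG \<and> stoprcv st j) \<longrightarrow>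
        Smat st j k b \<le> Smat st b k b) \<and>
     (\<forall>j. \<not> stoprcv st j \<and> \<not> stopped st j \<longrightarrow> below_recomputation E dG (c j) j (Smat st j))"

lemma state_invD:
  assumes "state_inv E dG c st"
  shows "Smat st j l b \<le> 1"
    and "stoprcv st j \<Longrightarrow> Smat st j dG b = 1"
    and "stopped st j \<Longrightarrow> prodrow E j (Smat st j) dG = 1"
    and "E j b \<Longrightarrow> 1 \<le> k \<Longrightarrow> k \<le> dG \<Longrightarrow> \<not> (k = dG \<and> stoprcv st j) \<Longrightarrow>
           Smat st j k b \<le> Smat st b k b"
    and "\<not> stoprcv st j \<Longrightarrow> \<not> stopped st j \<Longrightarrow> below_recomputation E dG (c j) j (Smat st j)"
  using assms unfolding state_inv_def by blast+

lemma state_inv_init: "state_inv E dG c init_state"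
  by (simp add: state_inv_def init_state_def below_recomputation_def)

lemma stoprcv_finished:
  "state_inv E dG c st \<Longrightarrow> stoprcv st j \<Longrightarrow> prodrow E j (Smat st j) dG = 1"
  by (simp add: state_inv_def prodrow_def)

lemma after_awake_mono:
  assumes "state_inv E dG c st" "1 \<le> k" "k \<le> dG"
  shows "Smat st j k b \<le> after_awake E dG w c st j k b"
proof (cases "w j \<and> \<not> stopped st j \<and> prodrow E j (Smat st j) dG \<noteq> 1 \<and> b = j")
  case True
  then have "\<not> stoprcv st j" using stoprcv_finished assms(1) by metis
  then have "below_recomputation E dG (c j) j (Smat st j)"
    using state_invD(5)[OF assms(1)] True by blast
  from le_newcol[OF this assms(2,3)] True assms(2,3) show ?thesis by (simp add: after_awake_eq)
qed (auto simp: after_awake_eq)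

lemma after_awake_le_1:
  assumes "state_inv E dG c st" "\<forall>j. c j \<le> 1"
  shows "after_awake E dG w c st j k b \<le> 1"
  using assms newcol_le_1[of "c j" "Smat st j"]
  by (auto simp: after_awake_def awake_mat_def state_inv_def)

lemma Smat_step_mono:
  assumes "state_inv E dG c st" "\<forall>j. c j \<le> 1" "1 \<le> k" "k \<le> dG"
  shows "Smat st j k b \<le> Smat (step E dG w c st) j k b"
  using after_awake_mono[OF assms(1,3,4), of j b w] after_awake_mono[OF assms(1,3,4), of b b w]
    state_invD(1)[OF assms(1)] state_invD(4)[OF assms(1), of j b k] assms(3,4)
  unfolding step_simps by (auto simp del: One_nat_def)

lemma after_awake_own_le_step:
  assumes "state_inv E dG c st" "\<forall>j. c j \<le> 1" "\<forall>u. \<not> E u u"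
  shows "after_awake E dG w c st b k b \<le> Smat (step E dG w c st) b k b"
  using after_awake_le_1[OF assms(1,2), of w b k b] assms(3) unfolding step_simps by auto

lemma Smat_step_le_1:
  assumes "state_inv E dG c st" "\<forall>j. c j \<le> 1"
  shows "Smat (step E dG w c st) j l b \<le> 1"
  using after_awake_le_1[OF assms] unfolding step_simps by auto

lemma stoprcv_step_last_row:
  assumes "state_inv E dG c st" "stoprcv (step E dG w c st) j"
  shows "Smat (step E dG w c st) j dG b = 1"
proof (cases "stoprcv st j")
  case True
  then have "after_awake E dG w c st j = Smat st j"
    using after_awake_finished stoprcv_finished[OF assms(1)] by metis
  then show ?thesis using state_invD(2)[OF assms(1) True] True unfolding step_simps by auto
qed (use assms(2) in \<open>auto simp: step_simps\<close>)

lemma stopped_step_finished: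
  assumes "state_inv E dG c st" "stopped (step E dG w c st) j"
  shows "prodrow E j (Smat (step E dG w c st) j) dG = 1"
proof -
  have stp: "stopped st j \<or> sends_stop E dG w c st j" using assms(2) by (simp add: step_simps)
  then have "Smat (step E dG w c st) j = after_awake E dG w c st j"
    by (intro ext) (simp add: step_simps)
  with stp show ?thesis
    using after_awake_finished[of E j st dG w c] state_invD(3)[OF assms(1), of j]
    by (auto simp: sends_stop_def)
qed

lemma Smat_step_copy_le_owner:
  assumes inv: "state_inv E dG c st" and "\<forall>j. c j \<le> 1" and irrefl: "\<forall>u. \<not> E u u"
    and "E j b" "1 \<le> k" "k \<le> dG" and no_stop: "\<not> (k = dG \<and> stoprcv (step E dG w c st) j)"
  shows "Smat (step E dG w c st) j k b \<le> Smat (step E dG w c st) b k b"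
proof -
  have "b \<noteq> j" using assms(4) irrefl by auto
  have "\<not> (k = dG \<and> stoprcv st j)" using no_stop by (auto simp: step_simps)
  then have "Smat st j k b \<le> after_awake E dG w c st b k b"
    using state_invD(4)[OF inv assms(4-6)] after_awake_mono[OF inv assms(5,6), of b b w] by linarith
  then have "Smat (step E dG w c st) j k b \<le> after_awake E dG w c st b k b"
    using no_stop after_awake_eq[of E dG w c st j k b] \<open>b \<noteq> j\<close> unfolding step_simps
    by (auto split: if_splits)
  also have "\<dots> \<le> Smat (step E dG w c st) b k b"
    using after_awake_own_le_step[OF assms(1-3)] .
  finally show ?thesis .
qed

lemma below_recomputation_step:
  assumes inv: "state_inv E dG c st" and "\<forall>j. c j \<le> 1" and irrefl: "\<forall>u. \<not> E u u"
    and "c j \<le> c'"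
    and "\<not> stoprcv (step E dG w c st) j" "\<not> stopped (step E dG w c st) j"
  shows "below_recomputation E dG c' j (Smat (step E dG w c st) j)"
proof (rule below_recomputation_mono)
  have not_stopped: "\<not> stoprcv st j" "\<not> stopped st j" "\<not> sends_stop E dG w c st j"
    using assms(5,6) by (auto simp: step_simps)
  have "below_recomputation E dG (c j) j (Smat st j)"
    using state_invD(5)[OF inv not_stopped(1,2)] .
  then show "below_recomputation E dG (c j) j (after_awake E dG w c st j)"
    by (simp add: after_awake_def below_recomputation_awake_mat)
  show own: "\<forall>k. Smat (step E dG w c st) j k j = after_awake E dG w c st j k j"
    using not_stopped assms(5) irrefl by (simp add: step_simps) blast
  show "\<forall>k b. 1 \<le> k \<and> k \<le> dG \<longrightarrow> after_awake E dG w c st j k b \<le> Smat (step E dG w c st) j k b"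
  proof (intro allI impI)
    fix k b assume k: "1 \<le> k \<and> k \<le> dG"
    show "after_awake E dG w c st j k b \<le> Smat (step E dG w c st) j k b"
    proof (cases "b = j")
      case False
      then have "after_awake E dG w c st j k b = Smat st j k b" by (simp add: after_awake_eq)
      then show ?thesis using Smat_step_mono[OF assms(1,2)] k by simp
    qed (use own in simp)
  qed
qed (rule assms(4))

lemma state_inv_step:
  assumes "state_inv E dG c st" "\<forall>j. c j \<le> 1" "\<forall>u. \<not> E u u" "\<forall>j. c j \<le> c' j"
  shows "state_inv E dG c' (step E dG w c st)"
  unfolding state_inv_def
proof (intro conjI allI impI)
  show "Smat (step E dG w c st) j l b \<le> 1" for j l b
    using Smat_step_le_1[OF assms(1,2)] .
  show "Smat (step E dG w c st) j dG b = 1" if "stoprcv (step E dG w c st) j" for j b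
    using stoprcv_step_last_row[OF assms(1) that] .
  show "prodrow E j (Smat (step E dG w c st) j) dG = 1" if "stopped (step E dG w c st) j" for j
    using stopped_step_finished[OF assms(1) that] .
  show "Smat (step E dG w c st) j k b \<le> Smat (step E dG w c st) b k b"
    if "E j b \<and> 1 \<le> k \<and> k \<le> dG \<and> \<not> (k = dG \<and> stoprcv (step E dG w c st) j)" for j b k
    using Smat_step_copy_le_owner[OF assms(1-3)] that by blast
  show "below_recomputation E dG (c' j) j (Smat (step E dG w c st) j)"
    if "\<not> stoprcv (step E dG w c st) j \<and> \<not> stopped (step E dG w c st) j" for j
    using below_recomputation_step[OF assms(1-3)] assms(4) that by blast
qed

(* With F x meaning that C_x has been 1 at some time, this is the safety invariant. *)
definition sound_matrix ::
  "('v \<Rightarrow> 'v \<Rightarrow> bool) \<Rightarrow> nat \<Rightarrow> ('v \<Rightarrow> bool) \<Rightarrow> (nat \<Rightarrow> 'v \<Rightarrow> nat) \<Rightarrow> bool" where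
  "sound_matrix E dG F M \<longleftrightarrow>
     (\<forall>k b x. 1 \<le> k \<and> k \<le> dG \<and> M k b = 1 \<and> gdist E b x < k \<longrightarrow> F x)"

lemma newcol_sound:
  fixes E :: "'v::finite \<Rightarrow> 'v \<Rightarrow> bool"
  assumes conn: "connected_graph E" and irrefl: "\<forall>u. \<not> E u u"
    and flag: "c = 1 \<Longrightarrow> F j" and sound: "sound_matrix E dG F M"
  shows "newcol E j c M k = 1 \<Longrightarrow> 1 \<le> k \<Longrightarrow> k \<le> dG \<Longrightarrow> gdist E j x < k \<Longrightarrow> F x"
proof (induction k)
  case (Suc k)
  show ?case
  proof (cases k)
    case 0
    then show ?thesis using Suc.prems flag gdist_eq_0D[OF conn, of j x] by auto
  next
    case (Suc m)
    have row: "(\<Prod>b\<in>nbrs E j - {j}. M k b) = 1" and prev: "newcol E j c M k = 1"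
      using Suc.prems(1) Suc by (simp_all del: prod_eq_1_iff)
    show ?thesis
    proof (cases "gdist E j x < k")
      case True
      then show ?thesis using Suc.IH prev Suc.prems Suc by simp
    next
      case False
      then have "gdist E j x = Suc m" using Suc.prems Suc by simp
      then obtain y where y: "E j y" "gdist E y x \<le> m" using gdist_SucE[OF conn] by metis
      then have "y \<in> nbrs E j - {j}" using irrefl by (auto simp: nbrs_def)
      then have "M k y = 1" using row by (subst (asm) prod_eq_1_iff) auto
      then show ?thesis
        using sound[unfolded sound_matrix_def, rule_format, of k y x] y Suc Suc.prems by simp
    qed
  qed
qed simp

lemma sound_matrix_finished:
  fixes E :: "'v::finite \<Rightarrow> 'v \<Rightarrow> bool"
  assumes conn: "connected_graph E" and "1 \<le> diam E" and "sound_matrix E (diam E) F M"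
    and "prodrow E i M (diam E) = 1"
  shows "F x"
proof -
  have covers: "F x" if "b \<in> nbrs E i" "gdist E b x < diam E" for b
    using assms(2-4) that unfolding sound_matrix_def prodrow_eq_1_iff by blast
  show ?thesis
  proof (cases "gdist E i x < diam E")
    case True
    then show ?thesis using covers[of i] by (simp add: nbrs_def)
  next
    case False
    then have "gdist E i x = Suc (diam E - 1)" using gdist_le_diam[of E i x] assms(2) by simp
    then obtain y where "E i y" "gdist E y x \<le> diam E - 1" using gdist_SucE[OF conn] by metis
    then show ?thesis using covers[of y] assms(2) by (simp add: nbrs_def)
  qed
qed

lemma sound_matrix_after_awake:
  fixes E :: "'v::finite \<Rightarrow> 'v \<Rightarrow> bool"
  assumes conn: "connected_graph E" and irrefl: "\<forall>u. \<not> E u u"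
    and sound: "sound_matrix E dG F (Smat st j)" and flag: "c j = 1 \<Longrightarrow> F j"
  shows "sound_matrix E dG F (after_awake E dG w c st j)"
  unfolding sound_matrix_def
proof (intro allI impI, elim conjE)
  fix k b x
  assume k: "1 \<le> k" "k \<le> dG" and one: "after_awake E dG w c st j k b = 1" and x: "gdist E b x < k"
  show "F x"
  proof (cases "w j \<and> \<not> stopped st j \<and> prodrow E j (Smat st j) dG \<noteq> 1 \<and> b = j")
    case True
    then have "newcol E j (c j) (Smat st j) k = 1" using one k by (simp add: after_awake_eq)
    then show ?thesis using newcol_sound[OF conn irrefl flag sound] k x True by blast
  next
    case False
    then have "Smat st j k b = 1" using one by (simp add: after_awake_eq split: if_splits)
    then show ?thesis using sound k x unfolding sound_matrix_def by blast
  qed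
qed

lemma sound_matrix_step:
  fixes E :: "'v::finite \<Rightarrow> 'v \<Rightarrow> bool"
  assumes conn: "connected_graph E" and irrefl: "\<forall>u. \<not> E u u" and "1 \<le> diam E"
    and sound: "\<forall>j. sound_matrix E (diam E) F (Smat st j)" and flags: "\<forall>j. c j = 1 \<longrightarrow> F j"
  shows "sound_matrix E (diam E) F (Smat (step E (diam E) w c st) j)"
proof -
  have awake: "sound_matrix E (diam E) F (after_awake E (diam E) w c st j')" for j'
    using sound_matrix_after_awake[OF conn irrefl] sound flags by blast
  show ?thesis
  proof (cases "\<exists>i. E j i \<and> sends_stop E (diam E) w c st i")
    case True
    then obtain i where "prodrow E i (after_awake E (diam E) w c st i) (diam E) = 1"
      by (auto simp: sends_stop_def)
    then have "\<forall>x. F x" using sound_matrix_finished[OF conn assms(3) awake] by blast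
    then show ?thesis unfolding sound_matrix_def by blast
  next
    case False
    then have "Smat (step E (diam E) w c st) j k b \<in>
        {after_awake E (diam E) w c st j k b, after_awake E (diam E) w c st b k b}" for k b
      unfolding step_simps by auto
    then show ?thesis
      using awake[unfolded sound_matrix_def] unfolding sound_matrix_def by (metis empty_iff insert_iff)
  qed
qed

locale logic_and_run =
  fixes E :: "'v::finite \<Rightarrow> 'v \<Rightarrow> bool" and W :: "nat \<Rightarrow> 'v \<Rightarrow> bool"
    and C :: "nat \<Rightarrow> 'v \<Rightarrow> nat" and Tbar :: "'v \<Rightarrow> nat"
  assumes undirected: "undirected_graph E" and connected: "connected_graph E"
    and two_nodes: "card (UNIV :: 'v set) \<ge> 2"
    and flags_01: "\<forall>t j. C t j \<in> {0, 1}"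
    and flags_stay_1: "\<forall>t s j. t \<le> s \<longrightarrow> C t j = 1 \<longrightarrow> C s j = 1"
    and wakes_up: "\<forall>j t. \<exists>s. t \<le> s \<and> s < t + Tbar j \<and> W s j"
begin

abbreviation "D \<equiv> diam E"
abbreviation "X t \<equiv> exec E D W C t"

definition finished :: "nat \<Rightarrow> 'v \<Rightarrow> bool" where
  "finished t j \<longleftrightarrow> prodrow E j (Smat (X t) j) D = 1"

lemma adjacency_irrefl: "\<forall>u. \<not> E u u"
  using undirected unfolding undirected_graph_def by auto

lemma adjacency_sym: "E u v \<Longrightarrow> E v u"
  using undirected unfolding undirected_graph_def by auto

lemma D_ge_1: "1 \<le> D"
  using diam_ge_1[OF connected two_nodes] .

lemma flag_le_1: "C t j \<le> 1"
  using flags_01 by (metis insert_iff le_numeral_extra(4) singletonD zero_le)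

lemma flag_le_Suc: "C t j \<le> C (Suc t) j"
  using flags_01[rule_format, of t j] flags_stay_1[rule_format, of t "Suc t" j] by auto

lemma state_inv_exec: "state_inv E D (C t) (X t)"
proof (induction t)
  case (Suc t)
  then show ?case using state_inv_step[OF Suc _ adjacency_irrefl] flag_le_1 flag_le_Suc by simp
qed (simp add: state_inv_init)

lemma Smat_exec_mono:
  assumes "1 \<le> k" "k \<le> D" "t \<le> s"
  shows "Smat (X t) j k b \<le> Smat (X s) j k b"
  using assms(3)
proof (induction s rule: dec_induct)
  case (step s)
  then show ?case using Smat_step_mono[OF state_inv_exec _ assms(1,2)] flag_le_1 by (fastforce intro: order_trans)
qed simp

lemma Smat_exec_one_stable:
  "Smat (X t) j k b = 1 \<Longrightarrow> 1 \<le> k \<Longrightarrow> k \<le> D \<Longrightarrow> t \<le> s \<Longrightarrow> Smat (X s) j k b = 1"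
  using Smat_exec_mono[of k t s j b] state_invD(1)[OF state_inv_exec, of s j k b] by simp

lemma finished_stable: "finished t j \<Longrightarrow> t \<le> s \<Longrightarrow> finished s j"
  unfolding finished_def prodrow_eq_1_iff using Smat_exec_one_stable D_ge_1 by blast

lemma stopped_imp_finished: "stopped (X t) j \<Longrightarrow> finished t j"
  using state_invD(3)[OF state_inv_exec] unfolding finished_def .

lemma stoprcv_imp_finished: "stoprcv (X t) j \<Longrightarrow> finished t j"
  using stoprcv_finished[OF state_inv_exec] unfolding finished_def .

lemma sends_stop_imp_finished:
  assumes "sends_stop E D (W t) (C t) (X t) j"
  shows "finished (Suc t) j" and "E j' j \<Longrightarrow> finished (Suc t) j'"
proof -
  show "finished (Suc t) j" using assms stopped_imp_finished[of "Suc t" j] by (simp add: step_simps)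
  assume "E j' j"
  then have "stopped (X (Suc t)) j' \<or> stoprcv (X (Suc t)) j'"
    using assms adjacency_sym by (auto simp: step_simps)
  then show "finished (Suc t) j'" using stopped_imp_finished stoprcv_imp_finished by blast
qed

lemma stopped_imp_neighbour_finished: "stopped (X t) j \<Longrightarrow> E j' j \<Longrightarrow> finished t j'"
proof (induction t)
  case (Suc t)
  then have "stopped (X t) j \<or> sends_stop E D (W t) (C t) (X t) j" by (simp add: step_simps)
  then show ?case
    using Suc finished_stable[of t j' "Suc t"] sends_stop_imp_finished(2) by auto
qed (simp add: init_state_def)

lemma finished_spreads_to_neighbour:
  assumes "finished t j" "E j j'"
  obtains s where "finished s j'"
proof -
  obtain s where s: "t \<le> s" "W s j" using wakes_up by blast
  have "finished s j" using finished_stable assms(1) s(1) by blast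
  show thesis
  proof (cases "stopped (X s) j")
    case True
    then show thesis using stopped_imp_neighbour_finished adjacency_sym assms(2) that by blast
  next
    case False
    then have "sends_stop E D (W s) (C s) (X s) j"
      using \<open>finished s j\<close> s(2) after_awake_finished unfolding finished_def sends_stop_def by metis
    then show thesis using sends_stop_imp_finished(2) adjacency_sym assms(2) that by blast
  qed
qed

lemma finished_spreads:
  assumes "finished t j"
  shows "\<exists>s. finished s i"
proof -
  have "(j, i) \<in> (edges E)\<^sup>*" using connected unfolding connected_graph_def by blast
  then show ?thesis
  proof (induction rule: rtrancl_induct)
    case (step y z)
    then obtain s where "finished s y" "E y z" by (auto simp: edges_def)
    then show ?case using finished_spreads_to_neighbour by metis
  qed (use assms in blast)
qed

definition rows_settled :: "nat \<Rightarrow> nat \<Rightarrow> bool" where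
  "rows_settled l t \<longleftrightarrow> (\<forall>j b k. b \<in> nbrs E j \<and> 1 \<le> k \<and> k \<le> l \<longrightarrow> Smat (X t) j k b = 1)"

lemma rows_settled_mono: "rows_settled l t \<Longrightarrow> l \<le> D \<Longrightarrow> t \<le> s \<Longrightarrow> rows_settled l s"
  unfolding rows_settled_def using Smat_exec_one_stable by (meson order_trans)

lemma Smat_exec_Suc_if_unfinished:
  assumes "\<forall>t j. \<not> finished t j"
  shows "Smat (X (Suc t)) j k b =
    (if E j b \<and> W t b \<and> 1 \<le> k \<and> k \<le> D then after_awake E D (W t) (C t) (X t) b k b
     else after_awake E D (W t) (C t) (X t) j k b)"
proof -
  have "\<not> stopped (X t) j" "\<not> stoprcv (X t) j" "\<not> sends_stop E D (W t) (C t) (X t) j" for j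
    using assms stopped_imp_finished stoprcv_imp_finished sends_stop_imp_finished(1) by blast+
  moreover have "sends_col E D (W t) (X t) b = W t b" for b
    using assms calculation(1) unfolding sends_col_def finished_def by blast
  ultimately show ?thesis by (simp add: step_simps)
qed

lemma rows_settled_Suc:
  assumes unfinished: "\<forall>t j. \<not> finished t j" and flags: "\<forall>t j. t0 \<le> t \<longrightarrow> C t j = 1"
    and "t0 \<le> T" "rows_settled l T" "l < D"
  shows "rows_settled (Suc l) (T + Max (range Tbar))"
  unfolding rows_settled_def
proof (intro allI impI, elim conjE)
  fix j b k assume b: "b \<in> nbrs E j" and k: "1 \<le> k" "k \<le> Suc l"
  show "Smat (X (T + Max (range Tbar))) j k b = 1"
  proof (cases "k \<le> l")
    case True
    then show ?thesis
      using rows_settled_mono[OF assms(4), of "T + Max (range Tbar)"] assms(5) b k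
      unfolding rows_settled_def by auto
  next
    case False
    then have "k = Suc l" using k by simp
    obtain s where s: "T \<le> s" "s < T + Tbar b" "W s b" using wakes_up by blast
    have "\<forall>b'\<in>nbrs E b. \<forall>k'. 1 \<le> k' \<and> k' \<le> l \<longrightarrow> Smat (X s) b k' b' = 1"
      using rows_settled_mono[OF assms(4) _ s(1)] assms(5) unfolding rows_settled_def by simp
    then have "newcol E b 1 (Smat (X s) b) (Suc l) = 1"
      by (rule newcol_eq_1) simp_all
    moreover have "C s b = 1" "\<not> stopped (X s) b" "\<not> finished s b"
      using flags assms(3) s(1) unfinished stopped_imp_finished by auto
    ultimately have own: "after_awake E D (W s) (C s) (X s) b (Suc l) b = 1"
      using s(3) assms(5) by (simp add: after_awake_eq finished_def)
    have "Smat (X (Suc s)) j (Suc l) b = 1"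
    proof (cases "b = j")
      case True
      then show ?thesis using Smat_exec_Suc_if_unfinished[OF unfinished] own adjacency_irrefl by simp
    next
      case False
      then have "E j b" using b by (simp add: nbrs_def)
      then show ?thesis using Smat_exec_Suc_if_unfinished[OF unfinished] own s(3) assms(5) by simp
    qed
    moreover have "Suc s \<le> T + Max (range Tbar)"
    proof -
      have "Tbar b \<le> Max (range Tbar)" by simp
      then show ?thesis using s(2) by linarith
    qed
    ultimately show ?thesis
      using Smat_exec_one_stable[of "Suc s" j "Suc l" b] \<open>k = Suc l\<close> assms(5) by simp
  qed
qed

lemma rows_settled_exists:
  assumes "\<forall>t j. \<not> finished t j" "\<forall>t j. t0 \<le> t \<longrightarrow> C t j = 1"
  shows "l \<le> D \<Longrightarrow> \<exists>T. t0 \<le> T \<and> rows_settled l T"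
proof (induction l)
  case 0
  then show ?case unfolding rows_settled_def by auto
next
  case (Suc l)
  then obtain T where "t0 \<le> T" "rows_settled l T" by auto
  then show ?case using rows_settled_Suc[OF assms] Suc.prems by (metis Suc_le_lessD le_add1 order_trans)
qed

lemma all_flags_imp_finished:
  assumes "\<forall>j. C t0 j = 1"
  shows "\<exists>t. finished t i"
proof (rule ccontr)
  assume "\<nexists>t. finished t i"
  then have unfinished: "\<forall>t j. \<not> finished t j" using finished_spreads by blast
  have "\<forall>t j. t0 \<le> t \<longrightarrow> C t j = 1" using assms flags_stay_1 by blast
  then obtain T where "rows_settled D T" using rows_settled_exists[OF unfinished] by blast
  then have "finished T i" unfolding finished_def prodrow_eq_1_iff rows_settled_def using D_ge_1 by simp
  with unfinished show False by blast
qed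

lemma sound_matrix_exec: "sound_matrix E D (\<lambda>x. \<exists>s. C s x = 1) (Smat (X t) j)"
proof (induction t arbitrary: j)
  case 0
  then show ?case by (simp add: sound_matrix_def init_state_def)
next
  case (Suc t)
  then show ?case
    using sound_matrix_step[OF connected adjacency_irrefl D_ge_1,
        of "\<lambda>x. \<exists>s. C s x = 1" "X t" "C t" "W t"]
    by auto
qed

lemma finished_imp_all_flags:
  assumes "finished t i"
  shows "\<exists>t. \<forall>j. C t j = 1"
proof -
  have "\<forall>x. \<exists>s. C s x = 1"
    using sound_matrix_finished[OF connected D_ge_1 sound_matrix_exec] assms unfolding finished_def by blast
  then obtain f where f: "\<And>x. C (f x) x = 1" by metis
  have "\<forall>j. C (Max (range f)) j = 1"
    using f flags_stay_1 by (metis Max_ge finite_UNIV finite_imageI rangeI)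
  then show ?thesis by blast
qed

end

theorem proposition1:
  fixes E :: "'v::finite \<Rightarrow> 'v \<Rightarrow> bool"
    and W :: "nat \<Rightarrow> 'v \<Rightarrow> bool"
    and C :: "nat \<Rightarrow> 'v \<Rightarrow> nat"
    and Tbar :: "'v \<Rightarrow> nat"
    and i :: 'v
  assumes "undirected_graph E"
    and "connected_graph E"
    and "card (UNIV :: 'v set) \<ge> 2"
    and "\<forall>t j. C t j \<in> {0, 1}"
    and "\<forall>j. C 0 j = 0"
    and "\<forall>t s j. t \<le> s \<longrightarrow> C t j = 1 \<longrightarrow> C s j = 1"
    and "\<forall>j t. \<exists>s. t \<le> s \<and> s < t + Tbar j \<and> W s j"
  shows "(\<exists>t. prodrow E i (Smat (exec E (diam E) W C t) i) (diam E) = 1)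
         \<longleftrightarrow> (\<exists>t. \<forall>j. C t j = 1)"
proof -
  interpret logic_and_run E W C Tbar
    using assms(1-4,6,7) by unfold_locales
  show ?thesis
    using finished_imp_all_flags all_flags_imp_finished unfolding finished_def by blast
qed

end
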